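(* Let $P\subset\mathbb{R}^d$ be a full-dimensional lattice polytope with codegree $a$ satisfying $P=\lfloor aP\rfloor+\{P\}$. Then: (1) $kP=\lfloor (k+a-1)P\rfloor+\{P\}$ for all integers $k\ge1$; (2) $\lfloor k'P\rfloor = \lfloor aP\rfloor + (k'-a)P$ for all integers $k'\ge a$.
   Context: $P$ has facet presentation $P=\{x: n_F(x)\ge -h_F\ \forall \text{ facets } F\}$ with $n_F\in(\mathbb{Z}^d)^*$ primitive inner normals and $h_F\in\mathbb{Z}$. The codegree is $a=\min\{k\in\mathbb{Z}_{\ge1}: \mathrm{int}(kP)\cap\mathbb{Z}^d\ne\varnothing\}$. For a lattice polytope $Q$, $\lfloor Q\rfloor=\mathrm{conv}(\mathrm{int}(Q)\cap\mathbb{Z}^d)$ (the floor polytope). The remainder polytope of $P$ is $\{P\}=\mathrm{conv}\{x\in\mathbb{Z}^d: n_F(x)\ge (a-1)h_F-1\ \forall F\}$. $+$ denotes Minkowski sum, and $0\cdot P=\{0\}$. *)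

theory Defs
  imports "HOL-Analysis.Analysis"
begin

definition integral_vec :: "real^'n \<Rightarrow> bool" where
  "integral_vec x \<longleftrightarrow> (\<forall>i. x $ i \<in> \<int>)"

definition lattice_polytope :: "(real^'n) set \<Rightarrow> bool" where
  "lattice_polytope P \<longleftrightarrow>
     (\<exists>S. finite S \<and> (\<forall>x\<in>S. integral_vec x) \<and> P = convex hull S)"

definition dilate :: "real \<Rightarrow> (real^'n) set \<Rightarrow> (real^'n) set" where
  "dilate k P = (\<lambda>x. k *\<^sub>R x) ` P"

definition msum :: "(real^'n) set \<Rightarrow> (real^'n) set \<Rightarrow> (real^'n) set" where
  "msum A B = {x + y | x y. x \<in> A \<and> y \<in> B}"

definition codegree :: "(real^'n) set \<Rightarrow> nat" where
  "codegree P = (LEAST k::nat. k \<ge> 1 \<and>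
      (\<exists>x. integral_vec x \<and> x \<in> interior (dilate (real k) P)))"

definition floor_polytope :: "(real^'n) set \<Rightarrow> (real^'n) set" where
  "floor_polytope Q = convex hull {x. integral_vec x \<and> x \<in> interior Q}"

definition primitive_vec :: "real^'n \<Rightarrow> bool" where
  "primitive_vec n \<longleftrightarrow> integral_vec n \<and> n \<noteq> 0 \<and>
     (\<forall>(k::nat) m. integral_vec m \<and> n = real k *\<^sub>R m \<longrightarrow> k = 1)"

text \<open>n is the primitive inner normal of facet F of P: n is primitive and the
  linear functional n attains its minimum over P on F (so n(x) >= -h_F on P,
  with h_F = -n(y) for y in F).\<close>
definition primitive_inner_normal :: "(real^'n) set \<Rightarrow> (real^'n) set \<Rightarrow> real^'n \<Rightarrow> bool" where
  "primitive_inner_normal P F n \<longleftrightarrow> primitive_vec n \<and>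
     (\<forall>x\<in>P. \<forall>y\<in>F. n \<bullet> y \<le> n \<bullet> x)"

definition remainder_polytope :: "(real^'n) set \<Rightarrow> (real^'n) set" where
  "remainder_polytope P = convex hull {x. integral_vec x \<and>
     (\<forall>F n. F facet_of P \<and> primitive_inner_normal P F n \<longrightarrow>
        (\<forall>y\<in>F. n \<bullet> x \<ge> (real (codegree P) - 1) * (- (n \<bullet> y)) - 1))}"

end

theory Submission
  imports Defs
begin

(*
  (1) Writing kP = (k - 1)P + P and substituting the hypothesis for P gives
  kP = (k - 1)P + \<lfloor>aP\<rfloor> + {P} \<subseteq> \<lfloor>(k + a - 1)P\<rfloor> + {P}, since translating an interior
  lattice point of aP by a lattice point of (k - 1)P gives an interior lattice point of
  (k + a - 1)P. Conversely, a point x + r with x \<in> \<lfloor>(k + a - 1)P\<rfloor> and r \<in> {P} outside kP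
  violates some facet inequality n_F \<ge> -k h_F, where n_F may be taken primitive because
  facets of lattice polytopes span rational hyperplanes. By integrality the interior lattice
  points of (k + a - 1)P satisfy n_F \<ge> -(k + a - 1) h_F + 1, and {P} satisfies
  n_F \<ge> (a - 1) h_F - 1 by definition; the sum of the two is the violated inequality.

  (2) By (1) with k = k' - a + 1, \<lfloor>k'P\<rfloor> + {P} = (k' - a)P + P = \<lfloor>aP\<rfloor> + (k' - a)P + {P}.
  Since \<lfloor>aP\<rfloor> + (k' - a)P is compact and convex and {P} is bounded, {P} cancels
  (Radstrom), and the reverse inclusion is the lattice point argument of (1).
*)

section \<open>Lattice vectors\<close>

lemma integral_vec_add: "integral_vec x \<Longrightarrow> integral_vec y \<Longrightarrow> integral_vec (x + y)"
  by (auto simp: integral_vec_def)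

lemma integral_vec_diff: "integral_vec x \<Longrightarrow> integral_vec y \<Longrightarrow> integral_vec (x - y)"
  by (auto simp: integral_vec_def)

lemma integral_vec_scaleR_Ints: "c \<in> \<int> \<Longrightarrow> integral_vec x \<Longrightarrow> integral_vec (c *\<^sub>R x)"
  by (auto simp: integral_vec_def)

lemma inner_integral_vec_Ints: "integral_vec x \<Longrightarrow> integral_vec y \<Longrightarrow> x \<bullet> y \<in> \<int>"
  unfolding inner_vec_def integral_vec_def by (auto intro!: Ints_sum Ints_mult)

lemma Ints_less_imp_add_one_le:
  fixes x y :: real
  assumes "x \<in> \<int>" "y \<in> \<int>" "x < y"
  shows "x + 1 \<le> y"
proof -
  obtain i j where "x = of_int i" "y = of_int j"
    using assms(1,2) by (auto elim!: Ints_cases)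
  then show ?thesis using assms(3) by simp
qed

lemma finite_integral_vec_bounded:
  fixes X :: "(real^'n) set"
  assumes "bounded X"
  shows "finite {x. integral_vec x \<and> x \<in> X}"
proof -
  obtain M where M: "\<And>x. x \<in> X \<Longrightarrow> norm x \<le> M"
    using assms bounded_iff by blast
  define K where "K = {k \<in> \<int>. \<bar>k\<bar> \<le> M}"
  have "{x. integral_vec x \<and> x \<in> X} \<subseteq> vec_lambda ` (PiE UNIV (\<lambda>_. K))"
  proof
    fix x assume x: "x \<in> {x. integral_vec x \<and> x \<in> X}"
    then have "(\<lambda>i. x $ i) \<in> PiE UNIV (\<lambda>_. K)"
      using M component_le_norm_cart[of x] order_trans
      by (fastforce simp: K_def integral_vec_def)
    then show "x \<in> vec_lambda ` (PiE UNIV (\<lambda>_. K))"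
      by (rule rev_image_eqI) simp
  qed
  moreover have "finite K"
    unfolding K_def by (rule finite_abs_int_segment)
  ultimately show ?thesis
    by (meson finite_PiE finite finite_imageI finite_subset)
qed

lemma finite_integral_vec_divisors:
  fixes n :: "real^'n"
  assumes "n \<noteq> 0"
  shows "finite {k::nat. k \<ge> 1 \<and> integral_vec ((1 / real k) *\<^sub>R n)}"
    (is "finite ?K")
proof -
  obtain i where i: "n $ i \<noteq> 0" using assms by (auto simp: vec_eq_iff)
  have "k \<le> nat \<lceil>\<bar>n $ i\<bar>\<rceil>" if "k \<in> ?K" for k
  proof -
    have k: "k \<ge> 1" "(1 / real k) * n $ i \<in> \<int>"
      using that by (auto simp: integral_vec_def)
    then have "1 \<le> \<bar>(1 / real k) * n $ i\<bar>"
      using i by (intro Ints_nonzero_abs_ge1) auto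
    then have "real k \<le> \<bar>n $ i\<bar>"
      using k(1) by (simp add: abs_mult field_simps)
    then show ?thesis by linarith
  qed
  then have "?K \<subseteq> {..nat \<lceil>\<bar>n $ i\<bar>\<rceil>}" by auto
  then show ?thesis by (rule finite_subset) simp
qed

lemma integral_vec_primitive_multiple:
  fixes n :: "real^'n"
  assumes "integral_vec n" "n \<noteq> 0"
  obtains m and k :: nat where "primitive_vec m" "k \<ge> 1" "n = real k *\<^sub>R m"
proof -
  define K where "K = {k::nat. k \<ge> 1 \<and> integral_vec ((1 / real k) *\<^sub>R n)}"
  have "finite K" "1 \<in> K"
    using finite_integral_vec_divisors[OF assms(2)] assms(1) by (simp_all add: K_def)
  then have k: "Max K \<in> K" "\<And>j. j \<in> K \<Longrightarrow> j \<le> Max K"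
    by (auto intro!: Max_in)
  \<comment> \<open>Dividing by the largest admissible k leaves a primitive vector.\<close>
  define k where "k = Max K"
  define m where "m = (1 / real k) *\<^sub>R n"
  have k1: "k \<ge> 1" using k by (simp add: k_def K_def)
  have "primitive_vec m"
    unfolding primitive_vec_def
  proof (intro conjI allI impI)
    show "integral_vec m" using k by (simp add: K_def m_def k_def)
    show "m \<noteq> 0" using k1 assms(2) by (simp add: m_def)
    fix j :: nat and m'
    assume j: "integral_vec m' \<and> m = real j *\<^sub>R m'"
    with \<open>m \<noteq> 0\<close> have "j \<noteq> 0" by auto
    with j have "m' = (1 / real j) *\<^sub>R m"
      by simp
    also have "\<dots> = (1 / real (k * j)) *\<^sub>R n"
      by (simp add: m_def mult.commute)
    finally have "k * j \<in> K"
      using j k1 \<open>j \<noteq> 0\<close> by (simp add: K_def)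
    then have "k * j \<le> k" using k by (simp add: k_def)
    then show "j = 1" using k1 \<open>j \<noteq> 0\<close> by simp
  qed
  moreover have "n = real k *\<^sub>R m" using k1 by (simp add: m_def)
  ultimately show thesis using k1 that by blast
qed

lemma primitive_vec_positive_multiple:
  fixes A :: "real^'n"
  assumes "integral_vec (c *\<^sub>R A)" "c *\<^sub>R A \<noteq> 0"
  obtains m d where "primitive_vec m" "d > 0" "m = d *\<^sub>R A"
proof -
  have "integral_vec (sgn c *\<^sub>R (c *\<^sub>R A))"
    using assms(1) by (rule integral_vec_scaleR_Ints[rotated]) (auto simp: sgn_real_def)
  then have "integral_vec (\<bar>c\<bar> *\<^sub>R A)" by (simp add: abs_sgn mult.commute)
  moreover have "\<bar>c\<bar> *\<^sub>R A \<noteq> 0" using assms(2) by simp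
  ultimately obtain m k where m: "primitive_vec m" "(k::nat) \<ge> 1" "\<bar>c\<bar> *\<^sub>R A = real k *\<^sub>R m"
    by (rule integral_vec_primitive_multiple)
  show thesis
  proof
    show "primitive_vec m" by (fact m(1))
    show "\<bar>c\<bar> / real k > 0" using assms(2) m(2) by simp
    have "(\<bar>c\<bar> / real k) *\<^sub>R A = (1 / real k) *\<^sub>R (\<bar>c\<bar> *\<^sub>R A)" by simp
    also have "\<dots> = m" using m(2,3) by simp
    finally show "m = (\<bar>c\<bar> / real k) *\<^sub>R A" ..
  qed
qed

section \<open>Dilations and Minkowski sums\<close>

lemma msum_eq_set_plus: "msum A B = A + B"
  by (auto simp: msum_def set_plus_def)

lemma dilate_1 [simp]: "dilate 1 P = P"
  by (simp add: dilate_def)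

lemma convex_dilate: "convex P \<Longrightarrow> convex (dilate c P)"
  unfolding dilate_def by (rule convex_scaling)

lemma compact_dilate: "compact P \<Longrightarrow> compact (dilate c P)"
  unfolding dilate_def by (rule compact_scaling)

lemma dilate_add:
  assumes "convex P" "0 \<le> s" "0 \<le> t"
  shows "dilate (s + t) P = dilate s P + dilate t P"
proof
  show "dilate (s + t) P \<subseteq> dilate s P + dilate t P"
    by (auto simp: dilate_def set_plus_def scaleR_add_left)
  show "dilate s P + dilate t P \<subseteq> dilate (s + t) P"
  proof
    fix z assume "z \<in> dilate s P + dilate t P"
    then obtain p q where pq: "p \<in> P" "q \<in> P" "z = s *\<^sub>R p + t *\<^sub>R q"
      by (auto simp: dilate_def set_plus_def)
    show "z \<in> dilate (s + t) P"
    proof (cases "s + t = 0")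
      case True
      then have "s = 0" "t = 0" using assms by auto
      then show ?thesis using pq by (auto simp: dilate_def)
    next
      case False
      then have st: "s + t > 0" using assms by auto
      define w where "w = (s / (s + t)) *\<^sub>R p + (t / (s + t)) *\<^sub>R q"
      have "w \<in> P"
        unfolding w_def using assms pq st
        by (intro convexD) (auto simp: add_divide_distrib[symmetric])
      moreover have "z = (s + t) *\<^sub>R w"
        using st pq by (simp add: w_def scaleR_add_right)
      ultimately show ?thesis by (auto simp: dilate_def)
    qed
  qed
qed

lemma bounded_set_plus_imp_bounded:
  fixes A B :: "'a::real_normed_vector set"
  assumes "bounded (A + B)" "a \<in> A"
  shows "bounded B"
proof -
  have "B \<subseteq> (\<lambda>x. - a + x) ` (A + B)"
  proof
    fix y assume "y \<in> B"
    then have "a + y \<in> A + B" using assms(2) by (rule set_plus_intro[rotated])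
    then show "y \<in> (\<lambda>x. - a + x) ` (A + B)" by (rule rev_image_eqI) simp
  qed
  then show ?thesis
    using bounded_translation[OF assms(1)] bounded_subset by blast
qed

lemma set_plus_cancel_bounded:
  fixes A B C :: "'a::euclidean_space set"
  assumes "A + C \<subseteq> B + C" "closed B" "convex B" "bounded C" "C \<noteq> {}"
  shows "A \<subseteq> B"
proof
  fix z assume z: "z \<in> A"
  show "z \<in> B"
  proof (rule ccontr)
    assume "z \<notin> B"
    then obtain u \<beta> where u: "u \<bullet> z < \<beta>" "\<And>x. x \<in> B \<Longrightarrow> \<beta> < u \<bullet> x"
      using separating_hyperplane_closed_point[OF assms(3,2)] by blast
    have bdd: "bdd_below ((\<bullet>) u ` C)"
      using assms(4)
      by (rule bounded_imp_bdd_below[OF bounded_linear_image]) (rule bounded_linear_inner_right)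
    define \<mu> where "\<mu> = Inf ((\<bullet>) u ` C)"
    \<comment> \<open>u exceeds \<beta> + \<mu> on B + C, but not on z + C.\<close>
    obtain c where c: "c \<in> C" "u \<bullet> c < \<mu> + (\<beta> - u \<bullet> z)"
      using cInf_less_iff[OF _ bdd, of "\<mu> + (\<beta> - u \<bullet> z)"] u(1) assms(5) \<mu>_def by auto
    have "z + c \<in> B + C" using assms(1) z c by (auto simp: set_plus_def)
    then obtain b c' where bc: "b \<in> B" "c' \<in> C" "z + c = b + c'"
      by (auto elim!: set_plus_elim)
    have "u \<bullet> c' = u \<bullet> z + u \<bullet> c - u \<bullet> b"
      using bc(3) by (metis add_diff_cancel_left' diff_add_cancel inner_add_right inner_diff_right)
    also have "\<dots> < \<mu>" using c u(2)[OF bc(1)] by simp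
    finally show False
      using cInf_lower[OF imageI[OF bc(2)] bdd] by (simp add: \<mu>_def)
  qed
qed

section \<open>Primitive normals of lattice facets\<close>

lemma det_Ints:
  fixes M :: "real^'n^'n"
  assumes "\<And>i j. M $ i $ j \<in> \<int>"
  shows "det M \<in> \<int>"
  unfolding det_def using assms by (auto intro!: Ints_sum Ints_mult Ints_prod)

lemma det_replace_row_eq_inner:
  fixes r :: "'n \<Rightarrow> real^'n"
  shows "det (\<chi> i. if i = k then w else r i)
       = (\<chi> j. det (\<chi> i. if i = k then axis j 1 else r i)) \<bullet> w"
proof -
  have "det (\<chi> i. if i = k then w else r i)
      = det (\<chi> i. if i = k then (\<Sum>j\<in>UNIV. w $ j *s axis j 1) else r i)"
    by (simp only: basis_expansion)
  also have "\<dots> = (\<Sum>j\<in>UNIV. det (\<chi> i. if i = k then w $ j *s axis j 1 else r i))"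
    by (rule det_linear_row_sum) simp
  also have "\<dots> = (\<Sum>j\<in>UNIV. w $ j * det (\<chi> i. if i = k then axis j 1 else r i))"
    by (subst det_row_mul) simp
  finally show ?thesis by (simp add: inner_vec_def mult.commute)
qed

lemma det_replace_row_nonzero:
  fixes g :: "'n \<Rightarrow> real^'n"
  assumes "bij_betw g (UNIV - {k}) B" "independent B" "w \<notin> span B"
  shows "det (\<chi> i. if i = k then w else g i) \<noteq> 0"
proof -
  let ?R = "\<chi> i. if i = k then w else g i"
  have "rows ?R = {if i = k then w else g i | i. i \<in> UNIV}"
    by (simp add: rows_def row_def vec_lambda_eta)
  also have "\<dots> = insert w (g ` (UNIV - {k}))" by auto
  also have "\<dots> = insert w B" using assms(1) by (simp add: bij_betw_def)
  finally have rows: "rows ?R = insert w B" .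
  have "card B = CARD('n) - 1"
    using bij_betw_same_card[OF assms(1)] by (simp add: card_Diff_singleton)
  moreover have "card (insert w B) = Suc (card B)"
    using assms(3) span_base[of w B] finiteI_independent[OF assms(2)] by (metis card_insert_disjoint)
  moreover have "0 < CARD('n)" by (simp add: finite_UNIV_card_ge_0)
  ultimately have "card (insert w B) = CARD('n)" by linarith
  moreover have "card (insert w B) \<le> dim (rows ?R)"
    using independent_insertI[OF assms(3,2)] rows by (simp add: independent_card_le_dim)
  ultimately have "\<not> rank ?R < CARD('n)" by (simp add: row_rank_def)
  then show ?thesis using det_eq_0_rank by blast
qed

lemma exists_integral_normal:
  fixes S :: "(real^'n) set"
  assumes "dim S = CARD('n) - 1" and "\<forall>x\<in>S. integral_vec x"
  shows "\<exists>n. integral_vec n \<and> n \<noteq> 0 \<and> (\<forall>x\<in>S. n \<bullet> x = 0)"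
proof -
  obtain B where B: "B \<subseteq> S" "independent B" "S \<subseteq> span B" "card B = CARD('n) - 1"
    using basis_exists[of S] assms(1) by metis
  fix k :: 'n
  have "card (UNIV - {k}) = card B" by (simp add: card_Diff_singleton B(4))
  then obtain g where g: "bij_betw g (UNIV - {k}) B"
    using finite_same_card_bij[of "UNIV - {k}" B] finiteI_independent[OF B(2)] by auto
  \<comment> \<open>n is the vector of cofactors along row k of a matrix whose other rows enumerate B.\<close>
  define R where "R w = (\<chi> i. if i = k then w else g i)" for w :: "real^'n"
  define n where "n = (\<chi> j. det (R (axis j 1)))"
  have det_R: "det (R w) = n \<bullet> w" for w
    unfolding R_def n_def by (rule det_replace_row_eq_inner)
  have gB: "g i \<in> B" if "i \<noteq> k" for i
    using g that by (auto simp: bij_betw_def)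
  have "R (axis j 1) $ i $ l \<in> \<int>" for i j l
    using gB B(1) assms(2) by (cases "i = k") (auto simp: R_def axis_def integral_vec_def)
  then have "integral_vec n"
    by (simp add: integral_vec_def n_def det_Ints)
  moreover have "n \<bullet> b = 0" if "b \<in> B" for b
  proof -
    obtain i where i: "i \<noteq> k" "b = g i" using g \<open>b \<in> B\<close> by (auto simp: bij_betw_def)
    have "det (R b) = 0"
      by (rule det_identical_rows[of k i]) (use i in \<open>simp_all add: row_def R_def\<close>)
    then show ?thesis by (simp add: det_R)
  qed
  then have "\<forall>x\<in>S. n \<bullet> x = 0"
    using B(3) orthogonal_to_span[of _ B n] by (auto simp: orthogonal_def)
  moreover have "span B \<noteq> UNIV"
  proof
    assume "span B = UNIV"
    then have "dim B = CARD('n)" using dim_span[of B] by simp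
    moreover have "0 < CARD('n)" by (simp add: finite_UNIV_card_ge_0)
    ultimately show False
      using dim_eq_card_independent[OF B(2)] B(4) by linarith
  qed
  then obtain w where "w \<notin> span B" by auto
  then have "n \<noteq> 0"
    using det_replace_row_nonzero[OF g B(2)] det_R[of w] by (auto simp: R_def)
  ultimately show ?thesis by blast
qed

lemma orthogonal_to_hyperplane_parallel:
  fixes u v :: "'a::euclidean_space"
  assumes "dim S = DIM('a) - 1" "u \<noteq> 0" "\<forall>x\<in>S. u \<bullet> x = 0" "\<forall>x\<in>S. v \<bullet> x = 0"
  shows "v = ((v \<bullet> u) / (u \<bullet> u)) *\<^sub>R u"
proof (rule ccontr)
  define w where "w = v - ((v \<bullet> u) / (u \<bullet> u)) *\<^sub>R u"
  assume "\<not> ?thesis"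
  then have "w \<noteq> 0" by (simp add: w_def)
  define W where "W = {y. \<forall>x\<in>span S. orthogonal x y}"
  have "dim W + dim (span S) = DIM('a)"
    using dim_subspace_orthogonal_to_vectors[of "span S" UNIV] by (simp add: W_def)
  then have dim_W: "dim W = 1"
    using assms(1) DIM_positive[where 'a='a] by (simp only: dim_span)
  have orth_W: "y \<in> W" if "\<forall>x\<in>S. y \<bullet> x = 0" for y
    using that orthogonal_to_span[of _ S y] by (auto simp: W_def orthogonal_def inner_commute)
  have "u \<in> W" "w \<in> W"
    using assms(3,4) by (auto intro!: orth_W simp: w_def inner_diff_left)
  moreover have "u \<bullet> w = 0"
    using assms(2) by (simp add: w_def inner_diff_right inner_commute)
  then have "independent {u, w}"
    using assms(2) \<open>w \<noteq> 0\<close>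
    by (intro pairwise_orthogonal_independent) (auto simp: pairwise_def orthogonal_def inner_commute)
  moreover have "u \<noteq> w"
    using \<open>u \<bullet> w = 0\<close> assms(2) by auto
  ultimately show False
    using independent_card_le_dim[of "{u, w}" W] dim_W by simp
qed

lemma polyhedron_separating_facet:
  fixes P :: "'a::euclidean_space set"
  assumes "polyhedron P" "interior P \<noteq> {}" "p \<notin> P"
  obtains A b where "A \<noteq> 0" "P \<subseteq> {x. A \<bullet> x \<le> b}" "b < A \<bullet> p"
    "P \<inter> {x. A \<bullet> x = b} facet_of P"
proof -
  obtain F where "finite F" and P_eq: "P = affine hull P \<inter> \<Inter>F"
    and halfspaces: "\<And>h. h \<in> F \<Longrightarrow> \<exists>a b. a \<noteq> 0 \<and> h = {x. a \<bullet> x \<le> b}"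
    and minimal: "\<And>F'. F' \<subset> F \<Longrightarrow> P \<subset> affine hull P \<inter> \<Inter>F'"
    using assms(1) by (simp add: polyhedron_Int_affine_minimal) meson
  then obtain a b where ab: "\<And>h. h \<in> F \<Longrightarrow> a h \<noteq> 0 \<and> h = {x. a h \<bullet> x \<le> b h}"
    by metis
  have "affine hull P = UNIV"
    using assms(2) by (rule affine_hull_nonempty_interior)
  then obtain h where "h \<in> F" "p \<notin> h"
    using assms(3) P_eq by auto
  show thesis
  proof
    show "a h \<noteq> 0" "b h < a h \<bullet> p"
      using ab[OF \<open>h \<in> F\<close>] \<open>p \<notin> h\<close> by auto
    show "P \<subseteq> {x. a h \<bullet> x \<le> b h}"
      using P_eq ab[OF \<open>h \<in> F\<close>] \<open>h \<in> F\<close> by blast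
    show "P \<inter> {x. a h \<bullet> x = b h} facet_of P"
      using facet_of_polyhedron_explicit[OF \<open>finite F\<close> P_eq ab minimal] \<open>h \<in> F\<close> by blast
  qed
qed

lemma lattice_polytope_imp_polytope: "lattice_polytope P \<Longrightarrow> polytope P"
  by (auto simp: lattice_polytope_def polytope_convex_hull)

lemma lattice_polytope_face:
  assumes "lattice_polytope P" "C face_of P"
  shows "lattice_polytope C"
proof -
  obtain S where S: "finite S" "\<forall>x\<in>S. integral_vec x" "P = convex hull S"
    using assms(1) unfolding lattice_polytope_def by blast
  then obtain T where "T \<subseteq> S" "C = convex hull T"
    using face_of_convex_hull_subset[of S C] assms(2) finite_imp_compact by metis
  then show ?thesis
    unfolding lattice_polytope_def using S finite_subset by blast
qed

lemma lattice_hyperplane_primitive_normal: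
  fixes C :: "(real^'n) set"
  assumes "lattice_polytope C" "aff_dim C = int CARD('n) - 1"
    and "A \<noteq> 0" "C \<subseteq> {x. A \<bullet> x = b}"
  obtains m c where "primitive_vec m" "c > 0" "m = c *\<^sub>R A"
proof -
  obtain T where T: "finite T" "\<forall>x\<in>T. integral_vec x" "C = convex hull T"
    using assms(1) unfolding lattice_polytope_def by blast
  have "C \<noteq> {}"
    using assms(2) by (auto simp: finite_UNIV_card_ge_0)
  then obtain t0 where t0: "t0 \<in> T" using T(3) by auto
  define D where "D = (+) (- t0) ` T"
  have "aff_dim T = int (dim D)"
    unfolding D_def by (rule aff_dim_eq_dim) (rule hull_inc[OF t0])
  then have "int (dim D) = int CARD('n) - 1"
    using assms(2) T(3) by (simp add: aff_dim_convex_hull)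
  then have dim_D: "dim D = CARD('n) - 1" by arith
  have "\<forall>d\<in>D. integral_vec d"
    using T(2) t0 by (auto simp: D_def integral_vec_diff)
  then obtain n where n: "integral_vec n" "n \<noteq> 0" "\<forall>d\<in>D. n \<bullet> d = 0"
    using exists_integral_normal[OF dim_D] by blast
  have "A \<bullet> t = b" if "t \<in> T" for t
    using assms(4) T(3) hull_subset[of T convex] that by blast
  then have "\<forall>d\<in>D. A \<bullet> d = 0"
    using t0 by (simp add: D_def inner_diff_right)
  then have "n = ((n \<bullet> A) / (A \<bullet> A)) *\<^sub>R A"
    using orthogonal_to_hyperplane_parallel[of D A n] dim_D assms(3) n(3) by simp
  then show thesis
    using primitive_vec_positive_multiple[of "(n \<bullet> A) / (A \<bullet> A)" A] n(1,2) that by metis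
qed

lemma lattice_polytope_separating_facet:
  fixes P :: "(real^'n) set"
  assumes "lattice_polytope P" "interior P \<noteq> {}" "p \<notin> P"
  obtains C m \<beta> where "C facet_of P" "primitive_inner_normal P C m" "\<beta> \<in> \<int>"
    "\<forall>y\<in>C. m \<bullet> y = \<beta>" "\<forall>x\<in>P. \<beta> \<le> m \<bullet> x" "m \<bullet> p < \<beta>"
proof -
  have "polyhedron P"
    using assms(1) by (simp add: lattice_polytope_imp_polytope polytope_imp_polyhedron)
  then obtain A b where A: "A \<noteq> 0" "P \<subseteq> {x. A \<bullet> x \<le> b}" "b < A \<bullet> p"
    and facet: "P \<inter> {x. A \<bullet> x = b} facet_of P"
    using polyhedron_separating_facet[OF _ assms(2,3)] by blast
  define C where "C = P \<inter> {x. A \<bullet> x = b}"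
  have lattice_C: "lattice_polytope C"
    using lattice_polytope_face[OF assms(1) facet_of_imp_face_of[OF facet]] by (simp add: C_def)
  have "aff_dim C = int CARD('n) - 1"
    using facet aff_dim_nonempty_interior[OF assms(2)] by (simp add: C_def facet_of_def)
  moreover have "- A \<noteq> 0" using A(1) by simp
  moreover have "C \<subseteq> {x. (- A) \<bullet> x = - b}" by (auto simp: C_def)
  ultimately obtain m c where m: "primitive_vec m" "c > 0" "m = c *\<^sub>R (- A)"
    using lattice_hyperplane_primitive_normal[OF lattice_C] by blast
  define \<beta> where "\<beta> = - c * b"
  have on_C: "\<forall>y\<in>C. m \<bullet> y = \<beta>" by (simp add: C_def \<beta>_def m(3))
  have on_P: "\<forall>x\<in>P. \<beta> \<le> m \<bullet> x"
  proof
    fix x assume "x \<in> P"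
    then have "c * (A \<bullet> x) \<le> c * b" using A(2) m(2) by (auto intro: mult_left_mono)
    then show "\<beta> \<le> m \<bullet> x" by (simp add: \<beta>_def m(3))
  qed
  have "c * b < c * (A \<bullet> p)" using A(3) m(2) by simp
  then have below: "m \<bullet> p < \<beta>" by (simp add: \<beta>_def m(3))
  have "\<beta> \<in> \<int>"
  proof -
    obtain T where T: "\<forall>x\<in>T. integral_vec x" "C = convex hull T"
      using lattice_C unfolding lattice_polytope_def by blast
    then obtain t where "t \<in> T" using facet by (auto simp: C_def facet_of_def)
    then have "\<beta> = m \<bullet> t" using on_C T(2) by (simp add: hull_inc)
    then show ?thesis
      using m(1) T(1) \<open>t \<in> T\<close> by (simp add: primitive_vec_def inner_integral_vec_Ints)
  qed
  moreover have "primitive_inner_normal P C m"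
    using m(1) on_C on_P by (simp add: primitive_inner_normal_def)
  ultimately show thesis
    using that facet[folded C_def] on_C on_P below by blast
qed

section \<open>Floor and remainder polytopes\<close>

lemma compact_floor_polytope:
  fixes Q :: "(real^'n) set"
  assumes "bounded Q"
  shows "compact (floor_polytope Q)"
  unfolding floor_polytope_def
  using assms bounded_interior finite_integral_vec_bounded
  by (blast intro: finite_imp_compact_convex_hull)

lemma floor_polytope_dilate_subset_halfspace:
  assumes "integral_vec m" "m \<noteq> 0" "\<beta> \<in> \<int>" "\<forall>x\<in>P. \<beta> \<le> m \<bullet> x"
  shows "floor_polytope (dilate (real c) P) \<subseteq> {y. real c * \<beta> + 1 \<le> m \<bullet> y}"
  unfolding floor_polytope_def
proof (rule hull_minimal, safe)
  fix w assume w: "integral_vec w" "w \<in> interior (dilate (real c) P)"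
  have "dilate (real c) P \<subseteq> {y. real c * \<beta> \<le> m \<bullet> y}"
  proof
    fix y assume "y \<in> dilate (real c) P"
    then obtain x where "x \<in> P" "y = real c *\<^sub>R x" by (auto simp: dilate_def)
    then show "y \<in> {y. real c * \<beta> \<le> m \<bullet> y}"
      using assms(4) by (simp add: mult_left_mono)
  qed
  then have "w \<in> interior {y. real c * \<beta> \<le> m \<bullet> y}"
    using interior_mono w(2) by blast
  then have "real c * \<beta> < m \<bullet> w"
    using assms(2) by simp
  then show "real c * \<beta> + 1 \<le> m \<bullet> w"
    using assms(1,3) w(1) by (intro Ints_less_imp_add_one_le) (auto simp: inner_integral_vec_Ints)
qed (rule convex_halfspace_ge)

lemma remainder_polytope_subset_halfspace:
  assumes "C facet_of P" "primitive_inner_normal P C m" "\<forall>y\<in>C. m \<bullet> y = \<beta>"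
  shows "remainder_polytope P \<subseteq> {y. (real (codegree P) - 1) * (- \<beta>) - 1 \<le> m \<bullet> y}"
  unfolding remainder_polytope_def
proof (rule hull_minimal, safe)
  fix x
  obtain t where "t \<in> C" using assms(1) by (auto simp: facet_of_def)
  assume "\<forall>F n. F facet_of P \<and> primitive_inner_normal P F n \<longrightarrow>
            (\<forall>y\<in>F. (real (codegree P) - 1) * - (n \<bullet> y) - 1 \<le> n \<bullet> x)"
  then have "(real (codegree P) - 1) * - (m \<bullet> t) - 1 \<le> m \<bullet> x"
    using assms(1,2) \<open>t \<in> C\<close> by blast
  then show "(real (codegree P) - 1) * - \<beta> - 1 \<le> m \<bullet> x"
    using assms(3) \<open>t \<in> C\<close> by simp
qed (rule convex_halfspace_ge)

lemma floor_polytope_plus_dilate_subset: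
  fixes P :: "(real^'n) set"
  assumes "lattice_polytope P" "c \<ge> 0"
  shows "floor_polytope (dilate c P) + dilate (real k) P \<subseteq> floor_polytope (dilate (c + real k) P)"
proof -
  obtain S where S: "finite S" "\<forall>x\<in>S. integral_vec x" "P = convex hull S"
    using assms(1) unfolding lattice_polytope_def by blast
  have "convex P" using S(3) by simp
  define X where "X = {x. integral_vec x \<and> x \<in> interior (dilate c P)}"
  have "floor_polytope (dilate c P) + dilate (real k) P
      = convex hull X + convex hull (dilate (real k) S)"
    unfolding floor_polytope_def X_def dilate_def S(3) by (simp add: convex_hull_scaling)
  also have "\<dots> = convex hull (X + dilate (real k) S)"
    by (rule convex_hull_set_plus[symmetric])
  also have "\<dots> \<subseteq> floor_polytope (dilate (c + real k) P)"
    unfolding floor_polytope_def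
  proof (rule hull_mono, safe)
    fix z assume "z \<in> X + dilate (real k) S"
    then obtain w s where ws: "w \<in> X" "s \<in> S" "z = w + real k *\<^sub>R s"
      by (auto simp: set_plus_def dilate_def)
    show "integral_vec z"
      using ws S(2) X_def by (auto intro!: integral_vec_add integral_vec_scaleR_Ints)
    \<comment> \<open>The translate of int(cP) by ks \<in> kP is an open subset of (c + k)P containing z.\<close>
    let ?U = "(\<lambda>x. real k *\<^sub>R s + x) ` interior (dilate c P)"
    have "real k *\<^sub>R s \<in> dilate (real k) P"
      using ws(2) S(3) by (auto simp: dilate_def intro: hull_inc)
    then have "?U \<subseteq> dilate (real k) P + dilate c P"
      using interior_subset by (blast intro: set_plus_intro)
    also have "\<dots> = dilate (c + real k) P"
      using dilate_add[OF \<open>convex P\<close>, of "real k" c] assms(2) by (simp add: add.commute)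
    finally have "?U \<subseteq> interior (dilate (c + real k) P)"
      by (intro interior_maximal open_translation) auto
    moreover have "z \<in> ?U" using ws X_def by (auto simp: add.commute)
    ultimately show "z \<in> interior (dilate (c + real k) P)" by blast
  qed
  finally show ?thesis .
qed

lemma floor_polytope_plus_remainder_subset_dilate:
  fixes P :: "(real^'n) set"
  assumes "lattice_polytope P" "interior P \<noteq> {}" "k \<ge> 1"
  shows "floor_polytope (dilate (real (k + codegree P - 1)) P) + remainder_polytope P
         \<subseteq> dilate (real k) P"
proof
  fix z assume "z \<in> floor_polytope (dilate (real (k + codegree P - 1)) P) + remainder_polytope P"
  then obtain x r where xr: "x \<in> floor_polytope (dilate (real (k + codegree P - 1)) P)"
    "r \<in> remainder_polytope P" "z = x + r"
    by (auto elim!: set_plus_elim)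
  show "z \<in> dilate (real k) P"
  proof (rule ccontr)
    assume "z \<notin> dilate (real k) P"
    then have "(1 / real k) *\<^sub>R z \<notin> P"
      using assms(3) by (auto simp: dilate_def image_iff)
    then obtain C m \<beta> where C: "C facet_of P" "primitive_inner_normal P C m" "\<beta> \<in> \<int>"
      "\<forall>y\<in>C. m \<bullet> y = \<beta>" "\<forall>x\<in>P. \<beta> \<le> m \<bullet> x" "m \<bullet> ((1 / real k) *\<^sub>R z) < \<beta>"
      using lattice_polytope_separating_facet[OF assms(1,2)] by blast
    have "integral_vec m" "m \<noteq> 0"
      using C(2) by (auto simp: primitive_inner_normal_def primitive_vec_def)
    then have "real (k + codegree P - 1) * \<beta> + 1 \<le> m \<bullet> x"
      using floor_polytope_dilate_subset_halfspace C(3,5) xr(1) by blast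
    moreover have "(real (codegree P) - 1) * (- \<beta>) - 1 \<le> m \<bullet> r"
      using remainder_polytope_subset_halfspace[OF C(1,2,4)] xr(2) by blast
    ultimately have "real k * \<beta> \<le> m \<bullet> z"
      using assms(3) xr(3) by (simp add: inner_add_right algebra_simps of_nat_diff)
    moreover have "m \<bullet> z < real k * \<beta>"
      using C(6) assms(3) by (simp add: field_simps)
    ultimately show False by simp
  qed
qed

lemma dilate_eq_floor_polytope_plus_remainder:
  fixes P :: "(real^'n) set"
  assumes "lattice_polytope P" "interior P \<noteq> {}"
    and decomp: "P = floor_polytope (dilate (real (codegree P)) P) + remainder_polytope P"
    and "k \<ge> 1"
  shows "dilate (real k) P
       = floor_polytope (dilate (real (k + codegree P - 1)) P) + remainder_polytope P"
proof
  let ?a = "codegree P" and ?F = "floor_polytope (dilate (real (codegree P)) P)"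
    and ?R = "remainder_polytope P"
  have "convex P" by (simp add: assms(1) lattice_polytope_imp_polytope polytope_imp_convex)
  have "dilate (real k) P = dilate (real (k - 1)) P + dilate 1 P"
    using dilate_add[OF \<open>convex P\<close>, of "real (k - 1)" 1] assms(4) by (simp add: of_nat_diff)
  also have "\<dots> = dilate (real (k - 1)) P + (?F + ?R)"
    using decomp by simp
  also have "\<dots> = (?F + dilate (real (k - 1)) P) + ?R"
    by (simp add: ac_simps)
  also have "\<dots> \<subseteq> floor_polytope (dilate (real ?a + real (k - 1)) P) + ?R"
    using floor_polytope_plus_dilate_subset[OF assms(1), of "real ?a" "k - 1"]
    by (intro set_plus_mono2) auto
  also have "real ?a + real (k - 1) = real (k + ?a - 1)"
    using assms(4) by simp
  finally show "dilate (real k) P \<subseteq> floor_polytope (dilate (real (k + ?a - 1)) P) + ?R" .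
qed (rule floor_polytope_plus_remainder_subset_dilate[OF assms(1,2,4)])

lemma floor_polytope_dilate_eq:
  fixes P :: "(real^'n) set"
  assumes "lattice_polytope P" "interior P \<noteq> {}"
    and decomp: "P = floor_polytope (dilate (real (codegree P)) P) + remainder_polytope P"
    and "codegree P \<le> k"
  shows "floor_polytope (dilate (real k) P)
       = floor_polytope (dilate (real (codegree P)) P) + dilate (real (k - codegree P)) P"
proof
  let ?a = "codegree P" and ?F = "floor_polytope (dilate (real (codegree P)) P)"
    and ?R = "remainder_polytope P"
  let ?B = "?F + dilate (real (k - ?a)) P"
  have "polytope P" by (rule lattice_polytope_imp_polytope[OF assms(1)])
  then have "compact P" "convex P" by (simp_all add: polytope_imp_compact polytope_imp_convex)
  have "floor_polytope (dilate (real k) P) + ?R = dilate (real (k - ?a + 1)) P"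
    using dilate_eq_floor_polytope_plus_remainder[OF assms(1-3), of "k - ?a + 1"] assms(4)
    by simp
  also have "\<dots> = dilate (real (k - ?a)) P + P"
    using dilate_add[OF \<open>convex P\<close>, of "real (k - ?a)" 1] by (simp add: add.commute)
  also have "\<dots> = dilate (real (k - ?a)) P + (?F + ?R)"
    using decomp by simp
  also have "\<dots> = ?B + ?R"
    by (simp add: ac_simps)
  finally have "floor_polytope (dilate (real k) P) + ?R \<subseteq> ?B + ?R" by simp
  moreover have "compact ?B"
  proof -
    have "compact ?F"
      using compact_floor_polytope compact_imp_bounded compact_dilate \<open>compact P\<close> by blast
    then show ?thesis
      using compact_sums[OF _ compact_dilate[OF \<open>compact P\<close>]]
      by (simp add: msum_eq_set_plus[symmetric] msum_def)
  qed
  moreover have "convex ?B"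
    using \<open>convex P\<close> by (intro convex_set_plus convex_dilate) (simp_all add: floor_polytope_def)
  moreover obtain x r where "x \<in> ?F" "r \<in> ?R"
    using assms(2) interior_subset decomp by (metis all_not_in_conv set_plus_elim subset_empty)
  then have "bounded ?R" "?R \<noteq> {}"
    using bounded_set_plus_imp_bounded[of ?F ?R x] decomp compact_imp_bounded[OF \<open>compact P\<close>]
    by auto
  ultimately show "floor_polytope (dilate (real k) P) \<subseteq> ?B"
    using set_plus_cancel_bounded compact_imp_closed by blast
  show "?B \<subseteq> floor_polytope (dilate (real k) P)"
    using floor_polytope_plus_dilate_subset[OF assms(1), of "real ?a" "k - ?a"] assms(4)
    by (simp add: of_nat_diff)
qed

theorem lemma3p9:
  fixes P :: "(real^'n) set" and a :: nat
  assumes "lattice_polytope P"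
    and "interior P \<noteq> {}"
    and "a = codegree P"
    and "P = msum (floor_polytope (dilate (real a) P)) (remainder_polytope P)"
  shows "(\<forall>k::nat. k \<ge> 1 \<longrightarrow>
            dilate (real k) P = msum (floor_polytope (dilate (real (k + a - 1)) P)) (remainder_polytope P))
       \<and> (\<forall>k'::nat. k' \<ge> a \<longrightarrow>
            floor_polytope (dilate (real k') P) = msum (floor_polytope (dilate (real a) P)) (dilate (real (k' - a)) P))"
proof -
  have decomp: "P = floor_polytope (dilate (real (codegree P)) P) + remainder_polytope P"
    using assms(4) unfolding assms(3) msum_eq_set_plus .
  show ?thesis
    unfolding assms(3) msum_eq_set_plus
    using dilate_eq_floor_polytope_plus_remainder[OF assms(1,2) decomp]
      floor_polytope_dilate_eq[OF assms(1,2) decomp]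
    by blast
qed

end
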